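(* There is a dilatory $\varphi$-function $G$ such that the Orlicz--Lorentz space $L_{1,G}$ is not a quasi-Banach space.
   Context: A $\varphi$-function is a continuous, strictly increasing function $F:[0,\infty)\to[0,\infty)$ with $F(0)=0$ and $\lim_{t\to\infty}F(t)=\infty$. It is dilatory if there are $1<c_1,c_2<\infty$ with $F(c_1t)\ge c_2F(t)$ for all $t\ge0$. For a $\varphi$-function $F$ put $\tilde F(t)=1/F(1/t)$ for $t>0$ and $\tilde F(0)=0$. Functions live on $[0,\infty)$ with Lebesgue measure $\lambda$; $f^*(x)=\sup\{t:\lambda(|f|\ge t)\ge x\}$. Luxemburg functional: $\|f\|_G=\inf\{c>0:\int_0^\infty G(|f(x)|/c)\,dx\le1\}$. The space $L_{1,G}$ consists of measurable $f$ (modulo a.e. equality) with $\|f\|_{1,G}=\|f^*\circ\tilde G^{-1}\|_G<\infty$, equipped with the functional $\|\cdot\|_{1,G}$. *)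

theory Defs
  imports "HOL-Analysis.Analysis"
begin

text \<open>phi-functions on [0,\<infinity>), represented as real functions whose values on negative
  arguments are irrelevant.\<close>
definition phi_function :: "(real \<Rightarrow> real) \<Rightarrow> bool" where
  "phi_function F \<longleftrightarrow> continuous_on {0..} F \<and> strict_mono_on {0..} F \<and> F 0 = 0
     \<and> (\<forall>t\<ge>0. F t \<ge> 0) \<and> filterlim F at_top at_top"

definition dilatory :: "(real \<Rightarrow> real) \<Rightarrow> bool" where
  "dilatory F \<longleftrightarrow> (\<exists>c1 c2. 1 < c1 \<and> 1 < c2 \<and> (\<forall>t\<ge>0. F (c1 * t) \<ge> c2 * F t))"

definition phi_tilde :: "(real \<Rightarrow> real) \<Rightarrow> real \<Rightarrow> real" where
  "phi_tilde F t = (if t = 0 then 0 else 1 / F (1 / t))"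

definition phi_inv :: "(real \<Rightarrow> real) \<Rightarrow> real \<Rightarrow> real" where
  "phi_inv F y = (THE x. 0 \<le> x \<and> F x = y)"

definition rearr :: "(real \<Rightarrow> real) \<Rightarrow> real \<Rightarrow> ereal" where
  "rearr f x = Sup {ereal t | t. emeasure (lebesgue_on {0..}) {y \<in> {0..}. t \<le> \<bar>f y\<bar>} \<ge> ennreal x}"

definition G_ext :: "(real \<Rightarrow> real) \<Rightarrow> ereal \<Rightarrow> ennreal" where
  "G_ext G u = (case u of ereal r \<Rightarrow> ennreal (G r) | PInfty \<Rightarrow> \<infinity> | MInfty \<Rightarrow> 0)"

text \<open>Luxemburg functional (inf of the empty set is \<infinity>).\<close>
definition luxemburg :: "(real \<Rightarrow> real) \<Rightarrow> (real \<Rightarrow> ereal) \<Rightarrow> ennreal" where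
  "luxemburg G h = Inf {ennreal c | c. c > 0 \<and>
       (\<integral>\<^sup>+ x \<in> {0..}. G_ext G (h x / ereal c) \<partial>lebesgue) \<le> 1}"

definition norm_1G :: "(real \<Rightarrow> real) \<Rightarrow> (real \<Rightarrow> real) \<Rightarrow> ennreal" where
  "norm_1G G f = luxemburg G (\<lambda>x. rearr f (phi_inv (phi_tilde G) x))"

definition L_1G :: "(real \<Rightarrow> real) \<Rightarrow> (real \<Rightarrow> real) set" where
  "L_1G G = {f. f \<in> borel_measurable (lebesgue_on {0..}) \<and> norm_1G G f < \<infinity>}"

text \<open>A set V of (representatives of a.e.-classes of) functions on [0,\<infinity>) with a functional N
  is a quasi-Banach space: V is a linear space, N is a quasi-norm on the quotient modulo
  a.e. equality, and V is complete with respect to N.\<close>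
definition quasi_banach :: "(real \<Rightarrow> real) set \<Rightarrow> ((real \<Rightarrow> real) \<Rightarrow> ennreal) \<Rightarrow> bool" where
  "quasi_banach V N \<longleftrightarrow>
     (\<forall>f\<in>V. \<forall>g\<in>V. (\<lambda>x. f x + g x) \<in> V) \<and>
     (\<forall>f\<in>V. \<forall>a::real. (\<lambda>x. a * f x) \<in> V) \<and>
     (\<forall>f\<in>V. N f < \<infinity>) \<and>
     (\<forall>f\<in>V. N f = 0 \<longleftrightarrow> (AE x in lebesgue_on {0..}. f x = 0)) \<and>
     (\<forall>f\<in>V. \<forall>a::real. N (\<lambda>x. a * f x) = ennreal \<bar>a\<bar> * N f) \<and>
     (\<exists>C::real. C \<ge> 1 \<and> (\<forall>f\<in>V. \<forall>g\<in>V. N (\<lambda>x. f x + g x) \<le> ennreal C * (N f + N g))) \<and>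
     (\<forall>u::nat \<Rightarrow> real \<Rightarrow> real. (\<forall>n. u n \<in> V) \<longrightarrow>
        (\<forall>e>0. \<exists>M. \<forall>n\<ge>M. \<forall>m\<ge>M. N (\<lambda>x. u n x - u m x) < e) \<longrightarrow>
        (\<exists>f\<in>V. (\<lambda>n. N (\<lambda>x. u n x - f x)) \<longlonglongrightarrow> 0))"

end

theory Submission
  imports Defs
begin

(* G0 t = t * slope t, where slope is increasing and climbs from about 2^-((j+1)^2) to
   2^-(j^2) just below height j = 4^-(j^2).  Since slope increases, G0 is dilatory; but
   G0 (height j / 2) / G0 (height j) is at most 2^-(2j+1) instead of 1/2, so W0 = phi_tilde G0
   grows by the factor 2^(2j+1) from jump_pt j = 1 / height j to 2 * jump_pt j.
   The decreasing step function, equal to height j on [jump_pt (j-1), jump_pt j), and the gap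
   step (y/2) - step y both have norm at most 2: their rearrangements drop to height (j+1)
   beyond 3/2 * jump_pt j, just early enough for the modular at scale 2 to be summable.
   Their sum step (y/2), however, stays at height j up to 2 * jump_pt j.  For c > 0 and every
   j >= c this puts mass at least 1/(2c) into the modular at scale c on the band
   [W0 (jump_pt j), W0 (2 * jump_pt j)), so the norm of step (y/2) is infinite and L_1G G0 is
   not closed under addition. *)

section \<open>Phi-functions and their inverses\<close>

lemma phi_function_pos:
  assumes "phi_function F" "0 < t"
  shows "0 < F t"
  using assms unfolding phi_function_def
  by (metis atLeast_iff less_imp_le order_refl strict_mono_onD)

lemma phi_tilde_eq: "0 < t \<Longrightarrow> phi_tilde F t = inverse (F (inverse t))"
  by (simp add: phi_tilde_def inverse_eq_divide)

lemma strict_mono_on_phi_tilde: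
  assumes F: "phi_function F"
  shows "strict_mono_on {0..} (phi_tilde F)"
proof (rule strict_mono_onI)
  fix s t :: real assume "s \<in> {0..}" "t \<in> {0..}" "s < t"
  then consider "s = 0" "0 < t" | "0 < s" "s < t" by fastforce
  then show "phi_tilde F s < phi_tilde F t"
  proof cases
    case 1
    then show ?thesis by (simp add: phi_tilde_eq phi_function_pos[OF F] phi_tilde_def)
  next
    case 2
    have "strict_mono_on {0..} F"
      using F by (simp add: phi_function_def)
    then have "F (inverse t) < F (inverse s)"
      using 2 by (simp add: strict_mono_onD less_imp_inverse_less)
    with 2 show ?thesis by (simp add: phi_tilde_eq phi_function_pos[OF F] less_imp_inverse_less)
  qed
qed

lemma continuous_on_phi_tilde:
  assumes F: "phi_function F"
  shows "continuous_on {0..} (phi_tilde F)"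
proof -
  have F_cont: "continuous_on {0..} F" and F_top: "filterlim F at_top at_top"
    using F by (auto simp: phi_function_def)
  have "continuous_on {0<..} (\<lambda>t. F (inverse t))"
    by (rule continuous_on_compose2[OF F_cont]) (auto intro!: continuous_intros)
  then have "continuous_on {0<..} (\<lambda>t. inverse (F (inverse t)))"
    by (rule continuous_on_inverse) (auto simp: phi_function_pos[OF F] less_imp_neq[symmetric])
  then have "continuous_on {0<..} (phi_tilde F)"
    by (rule continuous_on_cong[THEN iffD1, rotated 2]) (auto simp: phi_tilde_eq)
  then have "isCont (phi_tilde F) t" if "0 < t" for t
    using that by (simp add: continuous_on_eq_continuous_at)
  moreover have "(phi_tilde F \<longlongrightarrow> 0) (at_right 0)"
  proof -
    have "filterlim (\<lambda>t. F (inverse t)) at_top (at_right (0::real))"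
      by (rule filterlim_compose[OF F_top filterlim_inverse_at_top_right])
    then have "((\<lambda>t. inverse (F (inverse t))) \<longlongrightarrow> 0) (at_right 0)"
      by (rule tendsto_inverse_0_at_top)
    then show ?thesis
      by (rule tendsto_cong[THEN iffD1, rotated])
         (auto simp: phi_tilde_eq intro: eventually_mono[OF eventually_at_right_less])
  qed
  then have "continuous (at 0 within {0..}) (phi_tilde F)"
    by (simp add: continuous_within at_within_Ici_at_right phi_tilde_def)
  ultimately show ?thesis
    by (metis atLeast_iff continuous_at_imp_continuous_within continuous_on_eq_continuous_within
        order.not_eq_order_implies_strict)
qed

lemma filterlim_phi_tilde_at_top:
  assumes F: "phi_function F"
  shows "filterlim (phi_tilde F) at_top at_top"
proof -
  have "(F \<longlongrightarrow> 0) (at_right 0)"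
    using F
    by (metis at_within_Ici_at_right atLeast_iff continuous_on_def order_refl phi_function_def)
  then have "filterlim F (at_right 0) (at_right 0)"
    by (rule tendsto_imp_filterlim_at_right)
       (auto intro: eventually_mono[OF eventually_at_right_less] phi_function_pos[OF F])
  then have "filterlim (\<lambda>t. inverse (F (inverse t))) at_top at_top"
    by (intro filterlim_compose[OF filterlim_inverse_at_top_right]
          filterlim_compose[OF _ filterlim_inverse_at_right_top])
  then show ?thesis
    by (rule filterlim_cong[THEN iffD1, rotated 3])
       (auto simp: phi_tilde_eq eventually_at_top_dense intro!: exI[of _ 0])
qed

lemma phi_function_phi_tilde: "phi_function F \<Longrightarrow> phi_function (phi_tilde F)"
  using strict_mono_on_phi_tilde continuous_on_phi_tilde filterlim_phi_tilde_at_top phi_function_pos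
  by (fastforce simp: phi_function_def phi_tilde_def less_imp_le)

lemma phi_inv:
  assumes F: "phi_function F" and y: "0 \<le> y"
  shows "0 \<le> phi_inv F y" "F (phi_inv F y) = y"
proof -
  have F_cont: "continuous_on {0..} F" and F_strict: "strict_mono_on {0..} F"
    and F0: "F 0 = 0" and F_top: "filterlim F at_top at_top"
    using F by (auto simp: phi_function_def)
  obtain b where b: "0 \<le> b" "y \<le> F b"
    using eventually_conj[OF F_top[unfolded filterlim_at_top, rule_format, of y]
        eventually_ge_at_top[of 0]]
    by (auto simp: eventually_at_top_linorder)
  obtain s where s: "0 \<le> s" "F s = y"
    using IVT'[of F 0 y b] b y F0 continuous_on_subset[OF F_cont] by fastforce
  have "phi_inv F y = s"
    unfolding phi_inv_def
  proof (rule the_equality)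
    show "0 \<le> s \<and> F s = y" using s by simp
    show "s' = s" if "0 \<le> s' \<and> F s' = y" for s'
      using that s strict_mono_on_eq[OF F_strict] by auto
  qed
  with s show "0 \<le> phi_inv F y" "F (phi_inv F y) = y" by simp_all
qed

lemma phi_inv_le_iff:
  assumes F: "phi_function F" and "0 \<le> y" "0 \<le> s"
  shows "phi_inv F y \<le> s \<longleftrightarrow> y \<le> F s"
  using strict_mono_on_less_eq[of "{0..}" F "phi_inv F y" s] phi_inv[OF F \<open>0 \<le> y\<close>] assms
  by (auto simp: phi_function_def)

lemma phi_inv_pos:
  assumes F: "phi_function F" and "0 < y"
  shows "0 < phi_inv F y"
proof -
  have "F (phi_inv F y) = y" "F 0 = 0"
    using phi_inv(2)[OF F] assms F by (auto simp: phi_function_def)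
  then have "phi_inv F y \<noteq> 0"
    using \<open>0 < y\<close> by auto
  then show ?thesis
    using phi_inv(1)[OF F] assms by (simp add: less_le)
qed

section \<open>The functional of L_1G and decreasing rearrangement\<close>

lemma G_ext_le:
  assumes "mono G" "u \<le> ereal a"
  shows "G_ext G u \<le> ennreal (G a)"
  using assms by (cases u) (auto simp: G_ext_def mono_def intro: ennreal_leI)

lemma G_ext_ge:
  assumes "mono G" "ereal a \<le> u"
  shows "ennreal (G a) \<le> G_ext G u"
  using assms by (cases u) (auto simp: G_ext_def mono_def intro: ennreal_leI)

definition modular_1G :: "(real \<Rightarrow> real) \<Rightarrow> (real \<Rightarrow> real) \<Rightarrow> real \<Rightarrow> ennreal" where
  "modular_1G G f c =
     (\<integral>\<^sup>+ x \<in> {0..}. G_ext G (rearr f (phi_inv (phi_tilde G) x) / ereal c) \<partial>lebesgue)"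

lemma norm_1G_le: "0 < c \<Longrightarrow> modular_1G G f c \<le> 1 \<Longrightarrow> norm_1G G f \<le> ennreal c"
  unfolding norm_1G_def luxemburg_def modular_1G_def by (rule Inf_lower) blast

lemma norm_1G_eq_top: "(\<And>c. 0 < c \<Longrightarrow> 1 < modular_1G G f c) \<Longrightarrow> norm_1G G f = \<infinity>"
  unfolding norm_1G_def luxemburg_def modular_1G_def
  by (force simp: Inf_top_conv not_le[symmetric])

lemma rearr_le_of_level_sets:
  assumes "\<And>\<tau>. b < \<tau> \<Longrightarrow> emeasure (lebesgue_on {0..}) {y \<in> {0..}. \<tau> \<le> \<bar>f y\<bar>} < ennreal x"
  shows "rearr f x \<le> ereal b"
  unfolding rearr_def
proof (rule Sup_least, safe)
  fix t assume "ennreal x \<le> emeasure (lebesgue_on {0..}) {y \<in> {0..}. t \<le> \<bar>f y\<bar>}"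
  then show "ereal t \<le> ereal b"
    using assms[of t] by (metis ereal_less_eq(3) leD linorder_le_less_linear)
qed

lemma rearr_le_of_level_sets_subset:
  fixes f :: "real \<Rightarrow> real"
  assumes sub: "\<And>\<tau> y. b < \<tau> \<Longrightarrow> 0 \<le> y \<Longrightarrow> \<tau> \<le> \<bar>f y\<bar> \<Longrightarrow> y \<in> A"
    and A: "A \<in> sets lebesgue" "emeasure lebesgue A < ennreal x"
  shows "rearr f x \<le> ereal b"
proof (rule rearr_le_of_level_sets)
  fix \<tau> assume "b < \<tau>"
  then have level: "{y \<in> {0..}. \<tau> \<le> \<bar>f y\<bar>} \<subseteq> A \<inter> {0..}" using sub by auto
  have A0: "A \<inter> {0..} \<in> sets lebesgue"
    using A by (intro sets.Int) auto
  have "emeasure (lebesgue_on {0..}) {y \<in> {0..}. \<tau> \<le> \<bar>f y\<bar>}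
      \<le> emeasure (lebesgue_on {0..}) (A \<inter> {0..})"
    using level A0 by (intro emeasure_mono) (auto simp: sets_restrict_space_iff)
  also have "\<dots> = emeasure lebesgue (A \<inter> {0..})"
    using A0 by (intro emeasure_restrict_space) auto
  also have "\<dots> \<le> emeasure lebesgue A"
    using A by (intro emeasure_mono) auto
  finally show "emeasure (lebesgue_on {0..}) {y \<in> {0..}. \<tau> \<le> \<bar>f y\<bar>} < ennreal x"
    using A by simp
qed

lemma rearr_le_bound:
  fixes f :: "real \<Rightarrow> real"
  assumes "\<And>y. 0 \<le> y \<Longrightarrow> \<bar>f y\<bar> \<le> b" "0 < x"
  shows "rearr f x \<le> ereal b"
  using assms by (intro rearr_le_of_level_sets_subset[where A = "{}"]) force+

lemma rearr_ge_of_level_sets_subset: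
  fixes f :: "real \<Rightarrow> real"
  assumes f: "f \<in> borel_measurable (lebesgue_on {0..})"
    and A: "A \<in> sets lebesgue" "A \<subseteq> {0..}" "\<And>y. y \<in> A \<Longrightarrow> \<tau> \<le> \<bar>f y\<bar>"
    and x: "ennreal x \<le> emeasure lebesgue A"
  shows "ereal \<tau> \<le> rearr f x"
  unfolding rearr_def
proof (rule Sup_upper, safe intro!: exI[of _ \<tau>])
  have level: "{y \<in> space (lebesgue_on {0..}). \<tau> \<le> \<bar>f y\<bar>} \<in> sets (lebesgue_on {0::real..})"
    using f by measurable
  have "emeasure lebesgue A = emeasure (lebesgue_on {0..}) A"
    using A by (intro emeasure_restrict_space[symmetric]) auto
  also have "\<dots> \<le> emeasure (lebesgue_on {0..}) {y \<in> {0..}. \<tau> \<le> \<bar>f y\<bar>}"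
    using A level by (intro emeasure_mono) auto
  finally show "ennreal x \<le> emeasure (lebesgue_on {0..}) {y \<in> {0..}. \<tau> \<le> \<bar>f y\<bar>}"
    using x by simp
qed

lemma antimono_borel_measurable_lebesgue_on:
  fixes f :: "real \<Rightarrow> real"
  assumes "antimono f"
  shows "f \<in> borel_measurable (lebesgue_on S)"
proof -
  have "mono (\<lambda>y. - f y)"
    using assms by (auto simp: mono_def antimono_def)
  then have "(\<lambda>y. - (- f y)) \<in> borel_measurable borel"
    by (intro borel_measurable_uminus borel_measurable_mono)
  then show ?thesis
    by (simp add: measurable_restrict_space1 measurable_completion measurable_lborel1)
qed

section \<open>A dilatory phi-function\<close>

definition jump_pt :: "nat \<Rightarrow> real" where
  "jump_pt j = 4 ^ j\<^sup>2"

definition height :: "nat \<Rightarrow> real" where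
  "height j = 1 / jump_pt j"

definition weight :: "nat \<Rightarrow> real" where
  "weight i = (1/2) ^ i\<^sup>2"

definition ramp :: "nat \<Rightarrow> real \<Rightarrow> real" where
  "ramp i t = max 0 (min 1 (6 * jump_pt i * t - 3))"

definition slope :: "real \<Rightarrow> real" where
  "slope t = (\<Sum>i. weight i * ramp i t)"

definition G0 :: "real \<Rightarrow> real" where
  "G0 t = t * slope t"

lemma jump_pt_pos: "0 < jump_pt j"
  by (simp add: jump_pt_def)

lemma jump_pt_mono: "i \<le> j \<Longrightarrow> jump_pt i \<le> jump_pt j"
  unfolding jump_pt_def by (intro power_increasing) (auto simp: power_mono)

lemma jump_pt_Suc: "jump_pt (Suc j) = 4 ^ (2 * j + 1) * jump_pt j"
proof -
  have "(Suc j)\<^sup>2 = (2 * j + 1) + j\<^sup>2" by (simp add: power2_eq_square)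
  then show ?thesis unfolding jump_pt_def by (simp add: power_add)
qed

lemma jump_pt_Suc_ge_4: "4 * jump_pt j \<le> jump_pt (Suc j)"
proof -
  have "(4::real) ^ 1 \<le> 4 ^ (2 * j + 1)" by (intro power_increasing) auto
  then show ?thesis using jump_pt_Suc[of j] jump_pt_pos[of j] by (simp add: mult_right_mono)
qed

lemma jump_pt_Suc_ge_linear: "(2 * real j + 2) * jump_pt j \<le> jump_pt (Suc j)"
proof -
  have "real n + 1 \<le> (4::real) ^ n" for n
    by (induction n) auto
  from this[of "2 * j + 1"] have "2 * real j + 2 \<le> 4 ^ (2 * j + 1)" by simp
  then show ?thesis using jump_pt_Suc[of j] jump_pt_pos[of j] by (simp add: mult_right_mono)
qed

lemma jump_pt_ge: "real j + 1 \<le> jump_pt j"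
proof (induction j)
  case 0 then show ?case by (simp add: jump_pt_def)
next
  case (Suc j) then show ?case using jump_pt_Suc_ge_4[of j] by simp
qed

lemma two_jump_pt_le: "j < k \<Longrightarrow> 2 * jump_pt j \<le> jump_pt k"
  using jump_pt_Suc_ge_4[of j] jump_pt_mono[of "Suc j" k] jump_pt_pos[of j] by simp

lemma height_pos: "0 < height j"
  by (simp add: height_def jump_pt_pos)

lemma height_antimono: "i \<le> j \<Longrightarrow> height j \<le> height i"
  unfolding height_def using jump_pt_mono[of i j] jump_pt_pos[of i] by (simp add: frac_le)

lemma height_Suc_le: "height (Suc j) \<le> height j / (2 * real j + 2)"
proof -
  have "1 / jump_pt (Suc j) \<le> 1 / ((2 * real j + 2) * jump_pt j)"
    using jump_pt_Suc_ge_linear[of j] jump_pt_pos[of j] jump_pt_pos[of "Suc j"]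
    by (intro divide_left_mono) auto
  then show ?thesis by (simp add: height_def mult.commute)
qed

lemma exists_height_le: "0 < e \<Longrightarrow> \<exists>j. height j \<le> e"
proof -
  assume "0 < e"
  obtain n :: nat where "1 / e < real n" using reals_Archimedean2 by blast
  then have "1 / e \<le> jump_pt n" using jump_pt_ge[of n] by simp
  then have "height n \<le> e" using \<open>0 < e\<close> jump_pt_pos[of n] by (simp add: height_def field_simps)
  then show ?thesis by blast
qed

lemma weight_pos: "0 < weight i"
  by (simp add: weight_def)

lemma weight_Suc: "weight (Suc i) = weight i * (1/2) ^ (2 * i + 1)"
proof -
  have "(Suc i)\<^sup>2 = i\<^sup>2 + (2 * i + 1)" by (simp add: power2_eq_square)
  then show ?thesis unfolding weight_def by (simp add: power_add)
qed

lemma weight_Suc_le_half: "weight (Suc i) \<le> weight i / 2"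
proof -
  have "(1/2::real) ^ (2 * i + 1) \<le> (1/2) ^ 1" by (rule power_decreasing) auto
  then show ?thesis using weight_Suc[of i] weight_pos[of i] by (simp add: mult_left_mono)
qed

lemma weight_add_le: "weight (k + j) \<le> weight j * (1/2) ^ k"
proof (induction k)
  case 0 then show ?case by simp
next
  case (Suc k)
  have "weight (Suc k + j) \<le> weight (k + j) / 2" using weight_Suc_le_half[of "k + j"] by simp
  also have "\<dots> \<le> weight j * (1/2) ^ Suc k" using Suc by simp
  finally show ?case .
qed

lemma weight_le_geometric: "weight i \<le> (1/2) ^ i"
  using weight_add_le[of i 0] by (simp add: weight_def)

lemma summable_weight: "summable weight"
  using weight_le_geometric weight_pos
  by (intro summable_comparison_test[OF _ summable_geometric[of "1/2::real"]])
     (auto intro!: exI[of _ 0] simp: less_imp_le)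

lemma ramp_nonneg: "0 \<le> ramp i t" and ramp_le_1: "ramp i t \<le> 1"
  by (auto simp: ramp_def)

lemma ramp_mono: "s \<le> t \<Longrightarrow> ramp i s \<le> ramp i t"
  unfolding ramp_def using jump_pt_pos[of i] by (intro max.mono min.mono) auto

lemma ramp_eq_0: "t \<le> height i / 2 \<Longrightarrow> ramp i t = 0"
  using jump_pt_pos[of i] by (auto simp: ramp_def height_def field_simps)

lemma ramp_eq_1: "2 * height i / 3 \<le> t \<Longrightarrow> ramp i t = 1"
  using jump_pt_pos[of i] by (auto simp: ramp_def height_def field_simps)

lemma weight_ramp_le_weight: "weight i * ramp i t \<le> weight i"
  using ramp_le_1 weight_pos by (simp add: mult_le_cancel_left1)

lemma summable_weight_ramp: "summable (\<lambda>i. weight i * ramp i t)"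
  using weight_ramp_le_weight weight_pos ramp_nonneg
  by (intro summable_comparison_test[OF _ summable_weight])
     (auto intro!: exI[of _ 0] simp: abs_mult less_imp_le)

lemma slope_nonneg: "0 \<le> slope t"
  unfolding slope_def
  by (intro suminf_nonneg summable_weight_ramp) (simp add: ramp_nonneg weight_pos less_imp_le)

lemma slope_mono: "s \<le> t \<Longrightarrow> slope s \<le> slope t"
  unfolding slope_def using weight_pos
  by (intro suminf_le summable_weight_ramp) (simp add: ramp_mono mult_left_mono less_imp_le)

lemma weight_le_slope: "2 * height j / 3 \<le> t \<Longrightarrow> weight j \<le> slope t"
  using sum_le_suminf[OF summable_weight_ramp, of "{j}" t] ramp_eq_1[of j t]
  by (simp add: slope_def ramp_nonneg weight_pos less_imp_le)

lemma slope_le_tail: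
  assumes "t \<le> height j / 2"
  shows "slope t \<le> 2 * weight (Suc j)"
proof -
  have "ramp i t = 0" if "i \<le> j" for i
    using that assms height_antimono[of i j] by (intro ramp_eq_0) simp
  then have "slope t = (\<Sum>k. weight (k + Suc j) * ramp (k + Suc j) t)"
    unfolding slope_def using suminf_split_initial_segment[OF summable_weight_ramp, of t "Suc j"]
    by simp
  also have "\<dots> \<le> (\<Sum>k. weight (Suc j) * (1/2) ^ k)"
  proof (rule suminf_le)
    show "summable (\<lambda>k. weight (k + Suc j) * ramp (k + Suc j) t)"
      using summable_weight_ramp summable_iff_shift[of "\<lambda>i. weight i * ramp i t" "Suc j"] by simp
    show "summable (\<lambda>k. weight (Suc j) * (1/2::real) ^ k)"
      by (intro summable_mult summable_geometric) simp
    show "weight (k + Suc j) * ramp (k + Suc j) t \<le> weight (Suc j) * (1/2) ^ k" for k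
      using weight_ramp_le_weight weight_add_le order_trans by blast
  qed
  also have "\<dots> = 2 * weight (Suc j)"
    using suminf_mult[OF summable_geometric[of "1/2::real"], of "weight (Suc j)"]
      suminf_geometric[of "1/2::real"]
    by simp
  finally show ?thesis .
qed

lemma slope_pos: "0 < t \<Longrightarrow> 0 < slope t"
proof -
  assume "0 < t"
  then obtain j where "height j \<le> t" using exists_height_le by blast
  then have "weight j \<le> slope t" using height_pos[of j] by (intro weight_le_slope) simp
  then show ?thesis using weight_pos[of j] by simp
qed

lemma continuous_slope: "continuous_on UNIV slope"
proof (rule uniform_limit_theorem[where F=sequentially])
  show "uniform_limit UNIV (\<lambda>n t. \<Sum>i<n. weight i * ramp i t) slope sequentially"
    unfolding slope_def
    by (rule Weierstrass_m_test[OF _ summable_weight])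
       (simp add: abs_mult ramp_nonneg weight_pos weight_ramp_le_weight less_imp_le)
  show "\<forall>\<^sub>F n in sequentially. continuous_on UNIV (\<lambda>t. \<Sum>i<n. weight i * ramp i t)"
    unfolding ramp_def by (intro always_eventually allI continuous_intros)
qed auto

lemma G0_eq_0: "t \<le> 0 \<Longrightarrow> G0 t = 0"
proof -
  assume "t \<le> 0"
  then have "ramp i t = 0" for i
    using height_pos[of i] by (intro ramp_eq_0) simp
  then show ?thesis by (simp add: G0_def slope_def)
qed

lemma G0_strict_mono: "0 \<le> s \<Longrightarrow> s < t \<Longrightarrow> G0 s < G0 t"
  unfolding G0_def
  using mult_left_mono[OF slope_mono[of s t], of s]
    mult_strict_right_mono[OF _ slope_pos[of t], of s t]
  by simp

lemma G0_pos: "0 < t \<Longrightarrow> 0 < G0 t"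
  using G0_strict_mono[of 0 t] by (simp add: G0_def)

lemma mono_G0: "mono G0"
proof
  fix s t :: real assume "s \<le> t"
  show "G0 s \<le> G0 t"
  proof (cases "0 \<le> s")
    case True
    then show ?thesis using G0_strict_mono[of s t] \<open>s \<le> t\<close> by (cases "s = t") auto
  next
    case False
    then show ?thesis
      using G0_eq_0[of s] G0_eq_0[of t] slope_nonneg[of t] by (cases "0 \<le> t") (auto simp: G0_def)
  qed
qed

lemma G0_ge_weight: "2 * height j / 3 \<le> t \<Longrightarrow> t * weight j \<le> G0 t"
  using height_pos[of j] weight_le_slope[of j t] by (simp add: G0_def mult_left_mono)

lemma G0_half_height_le: "G0 (height j / 2) \<le> height j * weight (Suc j)"
  using slope_le_tail[of "height j / 2" j] height_pos[of j] by (simp add: G0_def mult_left_mono)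

lemma phi_function_G0: "phi_function G0"
  unfolding phi_function_def
proof (intro conjI allI impI)
  show "continuous_on {0..} G0"
    unfolding G0_def by (intro continuous_intros continuous_on_subset[OF continuous_slope]) auto
  show "strict_mono_on {0..} G0"
    by (auto intro: strict_mono_onI G0_strict_mono)
  show "0 \<le> G0 t" if "0 \<le> t" for t
    using that by (simp add: G0_def slope_nonneg)
  have "t \<le> G0 t" if "2/3 \<le> t" for t
    using G0_ge_weight[of 0 t] that by (simp add: height_def jump_pt_def weight_def)
  then show "filterlim G0 at_top at_top"
    by (auto intro!: filterlim_at_top_mono[OF filterlim_ident]
        eventually_at_top_linorderI[of "2/3"])
qed (simp add: G0_def)

lemma dilatory_G0: "dilatory G0"
  unfolding dilatory_def
proof (intro exI[of _ 2] conjI allI impI)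
  show "2 * G0 t \<le> G0 (2 * t)" if "0 \<le> t" for t
    using that slope_mono[of t "2 * t"] by (simp add: G0_def mult_left_mono)
qed auto

abbreviation W0 :: "real \<Rightarrow> real" where
  "W0 \<equiv> phi_tilde G0"

lemma phi_function_W0: "phi_function W0"
  by (rule phi_function_phi_tilde[OF phi_function_G0])

lemma W0_mono: "0 \<le> s \<Longrightarrow> s \<le> t \<Longrightarrow> W0 s \<le> W0 t"
  using phi_function_W0 by (auto simp: phi_function_def intro: strict_mono_on_leD)

lemma W0_jump_pt: "0 < c \<Longrightarrow> W0 (c * jump_pt j) = 1 / G0 (height j / c)"
  using jump_pt_pos[of j] by (simp add: phi_tilde_def height_def mult.commute)

lemma G0_half_height_mul_W0_le: "G0 (height i / 2) * W0 (3/2 * jump_pt i) \<le> 3/4 * (1/4) ^ i"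
proof -
  have h: "0 < height i" and w: "0 < weight i" using height_pos weight_pos by auto
  have lower: "(2 * height i / 3) * weight i \<le> G0 (2 * height i / 3)"
    by (rule G0_ge_weight) simp
  have W0_eq: "W0 (3/2 * jump_pt i) = 1 / G0 (2 * height i / 3)"
    using W0_jump_pt[of "3/2" i] by (simp add: mult.commute)
  have G0_pos': "0 < G0 (2 * height i / 3)"
    using h by (intro G0_pos) simp
  have W0_le: "W0 (3/2 * jump_pt i) \<le> 1 / ((2 * height i / 3) * weight i)"
    unfolding W0_eq using lower h w G0_pos' by (intro divide_left_mono) auto
  have "G0 (height i / 2) * W0 (3/2 * jump_pt i)
      \<le> (height i * weight (Suc i)) * (1 / ((2 * height i / 3) * weight i))"
    using G0_half_height_le[of i] W0_le G0_pos[of "height i / 2"] W0_eq G0_pos' h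
    by (intro mult_mono) auto
  also have "\<dots> = 3/2 * (1/2) ^ (2 * i + 1)"
    using h w by (simp add: weight_Suc field_simps)
  also have "\<dots> = 3/4 * (1/4) ^ i"
    by (simp add: power_mult power2_eq_square)
  finally show ?thesis .
qed

lemma W0_band_ge:
  assumes c: "0 < c" and j: "c \<le> real j"
  shows "1 / (2 * c) \<le> G0 (height j / c) * (W0 (2 * jump_pt j) - W0 (jump_pt j))"
proof -
  have h: "0 < height j" and w: "0 < weight (Suc j)" using height_pos weight_pos by auto
  have "height (Suc j) \<le> height j / (2 * real j + 2)" by (rule height_Suc_le)
  also have "\<dots> \<le> 3 * height j / (2 * c)"
    using c j h by (simp add: divide_simps)
  finally have "2 * height (Suc j) / 3 \<le> height j / c" using c by (simp add: field_simps)
  then have G0_lower: "height j / c * weight (Suc j) \<le> G0 (height j / c)"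
    by (rule G0_ge_weight)
  have "1 / (height j * weight (Suc j)) \<le> 1 / G0 (height j / 2)"
    using G0_half_height_le[of j] G0_pos[of "height j / 2"] h by (intro divide_left_mono) auto
  then have W0_2: "1 / (height j * weight (Suc j)) \<le> W0 (2 * jump_pt j)"
    using W0_jump_pt[of 2 j] by simp
  have "2 * height j * weight (Suc j) \<le> height j * weight j"
    using weight_Suc_le_half[of j] h by simp
  also have "\<dots> \<le> G0 (height j)"
    using G0_ge_weight[of j "height j"] h by simp
  finally have "1 / G0 (height j) \<le> 1 / (2 * height j * weight (Suc j))"
    using h w G0_pos[of "height j"] by (intro divide_left_mono) auto
  then have W0_1: "W0 (jump_pt j) \<le> 1 / (2 * height j * weight (Suc j))"
    using W0_jump_pt[of 1 j] by simp
  have "1 / (2 * c) = (height j / c * weight (Suc j)) * (1 / (2 * height j * weight (Suc j)))"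
    using c h w by (simp add: field_simps)
  also have "\<dots> \<le> G0 (height j / c) * (W0 (2 * jump_pt j) - W0 (jump_pt j))"
    using G0_lower W0_1 W0_2 c h w G0_pos[of "height j / c"]
    by (intro mult_mono) (auto simp: field_simps)
  finally show ?thesis .
qed

lemma exists_least_jump_pt: "\<exists>j. s \<le> 3/2 * jump_pt j \<and> (\<forall>i<j. 3/2 * jump_pt i < s)"
proof -
  obtain n :: nat where "s < real n" using reals_Archimedean2 by blast
  then have ex: "\<exists>j. s \<le> 3/2 * jump_pt j" using jump_pt_ge[of n] by (intro exI[of _ n]) simp
  define j where "j = (LEAST j. s \<le> 3/2 * jump_pt j)"
  have "s \<le> 3/2 * jump_pt j"
    unfolding j_def using ex by (rule LeastI_ex)
  moreover have "3/2 * jump_pt i < s" if "i < j" for i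
    using not_less_Least[OF that[unfolded j_def]] by simp
  ultimately show ?thesis by blast
qed

lemma rearr_phi_inv_W0_le:
  fixes f :: "real \<Rightarrow> real"
  assumes bounded: "\<And>y. 0 \<le> y \<Longrightarrow> \<bar>f y\<bar> \<le> height 0"
    and rearr_le: "\<And>j x. 3/2 * jump_pt j < x \<Longrightarrow> rearr f x \<le> ereal (height (Suc j))"
    and x: "0 < x"
  shows "\<exists>j. rearr f (phi_inv W0 x) \<le> ereal (height j) \<and> x \<le> W0 (3/2 * jump_pt j)"
proof -
  define s where "s = phi_inv W0 x"
  have s_pos: "0 < s" and W0_s: "W0 s = x"
    using phi_inv_pos[OF phi_function_W0 x] phi_inv[OF phi_function_W0] x by (auto simp: s_def)
  obtain j where sj: "s \<le> 3/2 * jump_pt j" and least: "\<And>i. i < j \<Longrightarrow> 3/2 * jump_pt i < s"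
    using exists_least_jump_pt by blast
  have "rearr f s \<le> ereal (height j)"
  proof (cases j)
    case 0
    then show ?thesis using rearr_le_bound[OF bounded s_pos] by simp
  next
    case (Suc i)
    then show ?thesis using rearr_le[OF least[of i]] by simp
  qed
  moreover have "x \<le> W0 (3/2 * jump_pt j)"
    using W0_mono[OF less_imp_le[OF s_pos] sj] W0_s by simp
  ultimately show ?thesis unfolding s_def by blast
qed

definition G0_layers :: "real \<Rightarrow> ennreal" where
  "G0_layers x = (\<Sum>i. ennreal (G0 (height i / 2)) * indicator {0..W0 (3/2 * jump_pt i)} x)"

lemma nn_integral_G0_layers: "(\<integral>\<^sup>+ x. G0_layers x \<partial>lebesgue) \<le> 1"
proof -
  have "(\<integral>\<^sup>+ x. G0_layers x \<partial>lebesgue)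
      = (\<Sum>i. \<integral>\<^sup>+ x. ennreal (G0 (height i / 2)) * indicator {0..W0 (3/2 * jump_pt i)} x \<partial>lebesgue)"
    unfolding G0_layers_def by (rule nn_integral_suminf) (simp add: measurable_completion)
  also have "\<dots> = (\<Sum>i. ennreal (G0 (height i / 2) * W0 (3/2 * jump_pt i)))"
  proof (rule suminf_cong)
    fix i
    have "0 \<le> W0 (3/2 * jump_pt i)"
      using W0_mono[of 0 "3/2 * jump_pt i"] jump_pt_pos[of i] by (simp add: phi_tilde_def)
    then show "(\<integral>\<^sup>+ x. ennreal (G0 (height i / 2)) * indicator {0..W0 (3/2 * jump_pt i)} x
        \<partial>lebesgue)
        = ennreal (G0 (height i / 2) * W0 (3/2 * jump_pt i))"
      using G0_pos[of "height i / 2"] height_pos[of i]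
      by (simp add: nn_integral_cmult_indicator ennreal_mult)
  qed
  also have "\<dots> \<le> (\<Sum>i. ennreal (3/4 * (1/4) ^ i))"
    by (intro suminf_le ennreal_leI G0_half_height_mul_W0_le) auto
  also have "\<dots> = ennreal (\<Sum>i. 3/4 * (1/4::real) ^ i)"
    by (rule suminf_ennreal2) (auto intro!: summable_mult summable_geometric)
  also have "(\<Sum>i. 3/4 * (1/4::real) ^ i) = 1"
    using suminf_mult[OF summable_geometric[of "1/4::real"], of "3/4"]
      suminf_geometric[of "1/4::real"]
    by simp
  finally show ?thesis by simp
qed

lemma G_ext_G0_le_G0_layers:
  fixes f :: "real \<Rightarrow> real"
  assumes bounded: "\<And>y. 0 \<le> y \<Longrightarrow> \<bar>f y\<bar> \<le> height 0"
    and rearr_le: "\<And>j x. 3/2 * jump_pt j < x \<Longrightarrow> rearr f x \<le> ereal (height (Suc j))"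
    and x: "0 < x"
  shows "G_ext G0 (rearr f (phi_inv W0 x) / ereal 2) \<le> G0_layers x"
proof -
  obtain j where hj: "rearr f (phi_inv W0 x) \<le> ereal (height j)"
    and xj: "x \<le> W0 (3/2 * jump_pt j)"
    using rearr_phi_inv_W0_le[OF bounded rearr_le x] by blast
  have half: "rearr f (phi_inv W0 x) / ereal 2 \<le> ereal (height j / 2)"
    using ereal_divide_right_mono[OF hj, of 2] by simp
  define layer where "layer i = ennreal (G0 (height i / 2)) * indicator {0..W0 (3/2 * jump_pt i)} x"
    for i
  have "G_ext G0 (rearr f (phi_inv W0 x) / ereal 2) \<le> layer j"
    using G_ext_le[OF mono_G0 half] xj x by (simp add: layer_def)
  also have "\<dots> \<le> suminf layer"
    using sum_le_suminf[of layer "{j}"] by (auto intro: summableI)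
  finally show ?thesis
    unfolding G0_layers_def layer_def .
qed

lemma norm_1G_G0_le_2:
  fixes f :: "real \<Rightarrow> real"
  assumes "\<And>y. 0 \<le> y \<Longrightarrow> \<bar>f y\<bar> \<le> height 0"
    and "\<And>j x. 3/2 * jump_pt j < x \<Longrightarrow> rearr f x \<le> ereal (height (Suc j))"
  shows "norm_1G G0 f \<le> 2"
proof -
  have "G_ext G0 (rearr f (phi_inv W0 x) / ereal 2) * indicator {0..} x \<le> G0_layers x"
    if "x \<noteq> 0" for x
  proof (cases "0 < x")
    case True
    then show ?thesis using G_ext_G0_le_G0_layers[OF assms True] by simp
  qed (use that in simp)
  moreover have "AE x in lebesgue. (x::real) \<noteq> 0"
    by (rule AE_completion) (rule AE_lborel_singleton)
  ultimately have "modular_1G G0 f 2 \<le> (\<integral>\<^sup>+ x. G0_layers x \<partial>lebesgue)"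
    unfolding modular_1G_def by (intro nn_integral_mono_AE) (auto elim: AE_mp)
  also have "\<dots> \<le> 1"
    by (rule nn_integral_G0_layers)
  finally have "norm_1G G0 f \<le> ennreal 2"
    by (intro norm_1G_le) auto
  then show ?thesis by simp
qed

section \<open>The step function and its dilation\<close>

definition step_index :: "real \<Rightarrow> nat" where
  "step_index y = (LEAST j. y < jump_pt j)"

definition step :: "real \<Rightarrow> real" where
  "step y = height (step_index y)"

definition step_gap :: "real \<Rightarrow> real" where
  "step_gap y = step (y / 2) - step y"

lemma less_jump_pt_step_index: "y < jump_pt (step_index y)"
proof -
  obtain n :: nat where "y < real n" using reals_Archimedean2 by blast
  then have "y < jump_pt n" using jump_pt_ge[of n] by simp
  then show ?thesis unfolding step_index_def by (rule LeastI)
qed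

lemma step_index_le: "y < jump_pt j \<Longrightarrow> step_index y \<le> j"
  unfolding step_index_def by (rule Least_le)

lemma step_index_gt: "jump_pt j \<le> y \<Longrightarrow> j < step_index y"
  using less_jump_pt_step_index[of y] jump_pt_mono[of "step_index y" j] by force

lemma step_index_mono: "y \<le> y' \<Longrightarrow> step_index y \<le> step_index y'"
  using step_index_le less_jump_pt_step_index[of y'] by force

lemma step_le_height_Suc: "jump_pt j \<le> y \<Longrightarrow> step y \<le> height (Suc j)"
  unfolding step_def using step_index_gt by (intro height_antimono) (simp add: Suc_le_eq)

lemma height_le_step: "y < jump_pt j \<Longrightarrow> height j \<le> step y"
  unfolding step_def using step_index_le by (intro height_antimono)

lemma step_pos: "0 < step y"
  by (simp add: step_def height_pos)

lemma step_le_height_0: "step y \<le> height 0"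
  unfolding step_def by (rule height_antimono) simp

lemma antimono_step: "antimono step"
  unfolding step_def by (intro antimonoI height_antimono step_index_mono)

lemma step_gap_nonneg: "0 \<le> y \<Longrightarrow> 0 \<le> step_gap y"
  unfolding step_gap_def using antimonoD[OF antimono_step, of "y / 2" y] by simp

lemma step_gap_le_height_0: "0 \<le> y \<Longrightarrow> step_gap y \<le> height 0"
  unfolding step_gap_def using step_le_height_0[of "y / 2"] step_pos[of y] by simp

lemma step_gap_eq_0: "jump_pt j / 2 \<le> y \<Longrightarrow> y < jump_pt j \<Longrightarrow> step_gap y = 0"
proof -
  assume y: "jump_pt j / 2 \<le> y" "y < jump_pt j"
  have "j \<le> step_index (y / 2)"
  proof (cases j)
    case (Suc i)
    then have "jump_pt i \<le> y / 2" using jump_pt_Suc_ge_4[of i] y by simp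
    then show ?thesis using step_index_gt[of i "y / 2"] Suc by simp
  qed simp
  moreover have "step_index (y / 2) \<le> step_index y"
    using y jump_pt_pos[of j] by (intro step_index_mono) simp
  moreover have "step_index y \<le> j"
    using y by (intro step_index_le)
  ultimately have "step_index (y / 2) = step_index y" by linarith
  then show ?thesis by (simp add: step_gap_def step_def)
qed

lemma step_gap_level_set:
  assumes y: "0 \<le> y" and \<tau>: "height (Suc j) < \<tau>" "\<tau> \<le> \<bar>step_gap y\<bar>"
  shows "y \<in> {0..<jump_pt j / 2} \<union> {jump_pt j..<2 * jump_pt j}"
proof -
  have gap: "\<tau> \<le> step_gap y" and "0 < \<tau>"
    using \<tau> step_gap_nonneg[OF y] height_pos[of "Suc j"] by auto
  have "y < 2 * jump_pt j"
  proof (rule ccontr)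
    assume "\<not> y < 2 * jump_pt j"
    then have "step (y / 2) \<le> height (Suc j)" by (intro step_le_height_Suc) simp
    then show False using gap \<tau>(1) step_pos[of y] by (simp add: step_gap_def)
  qed
  moreover have "\<not> (jump_pt j / 2 \<le> y \<and> y < jump_pt j)"
    using step_gap_eq_0[of j y] gap \<open>0 < \<tau>\<close> by auto
  ultimately show ?thesis using y by auto
qed

lemma rearr_step_le: "3/2 * jump_pt j < x \<Longrightarrow> rearr step x \<le> ereal (height (Suc j))"
proof (rule rearr_le_of_level_sets_subset[where A = "{0..<jump_pt j}"])
  show "y \<in> {0..<jump_pt j}" if "height (Suc j) < \<tau>" "0 \<le> y" "\<tau> \<le> \<bar>step y\<bar>" for \<tau> y
    using that step_le_height_Suc[of j y] step_pos[of y] by (auto simp: not_le[symmetric])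
  show "emeasure lebesgue {0..<jump_pt j} < ennreal x" if "3/2 * jump_pt j < x"
    using that jump_pt_pos[of j] by (simp add: ennreal_lessI)
qed simp

lemma rearr_step_gap_le: "3/2 * jump_pt j < x \<Longrightarrow> rearr step_gap x \<le> ereal (height (Suc j))"
proof (rule rearr_le_of_level_sets_subset
    [where A = "{0..<jump_pt j / 2} \<union> {jump_pt j..<2 * jump_pt j}"])
  show "y \<in> {0..<jump_pt j / 2} \<union> {jump_pt j..<2 * jump_pt j}"
    if "height (Suc j) < \<tau>" "0 \<le> y" "\<tau> \<le> \<bar>step_gap y\<bar>" for \<tau> y
    using step_gap_level_set that by blast
  assume x: "3/2 * jump_pt j < x"
  have "emeasure lebesgue ({0..<jump_pt j / 2} \<union> {jump_pt j..<2 * jump_pt j})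
      \<le> emeasure lebesgue {0..<jump_pt j / 2} + emeasure lebesgue {jump_pt j..<2 * jump_pt j}"
    by (rule emeasure_subadditive) auto
  also have "\<dots> = ennreal (3/2 * jump_pt j)"
    using jump_pt_pos[of j] by (simp add: ennreal_plus[symmetric])
  also have "\<dots> < ennreal x"
    using x jump_pt_pos[of j] by (intro ennreal_lessI) auto
  finally show "emeasure lebesgue ({0..<jump_pt j / 2} \<union> {jump_pt j..<2 * jump_pt j}) < ennreal x" .
qed simp

lemma step_in_L_1G: "step \<in> L_1G G0"
proof -
  have "norm_1G G0 step \<le> 2"
    using step_pos step_le_height_0 rearr_step_le
    by (intro norm_1G_G0_le_2) (auto simp: less_imp_le)
  then show ?thesis
    using antimono_borel_measurable_lebesgue_on[OF antimono_step]
    by (simp add: L_1G_def order_le_less_trans)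
qed

lemma step_gap_in_L_1G: "step_gap \<in> L_1G G0"
proof -
  have "norm_1G G0 step_gap \<le> 2"
    using step_gap_nonneg step_gap_le_height_0 rearr_step_gap_le by (intro norm_1G_G0_le_2) auto
  moreover have "step_gap \<in> borel_measurable (lebesgue_on {0..})"
    unfolding step_gap_def using antimono_borel_measurable_lebesgue_on antimono_step
    by (intro borel_measurable_diff) (auto simp: antimono_def)
  ultimately show ?thesis
    by (simp add: L_1G_def order_le_less_trans)
qed

lemma height_le_rearr_dilated_step:
  assumes "x \<le> 2 * jump_pt j"
  shows "ereal (height j) \<le> rearr (\<lambda>y. step (y / 2)) x"
proof (rule rearr_ge_of_level_sets_subset[where A = "{0..<2 * jump_pt j}"])
  show "(\<lambda>y. step (y / 2)) \<in> borel_measurable (lebesgue_on {0..})"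
    using antimono_step by (intro antimono_borel_measurable_lebesgue_on) (auto simp: antimono_def)
  show "height j \<le> \<bar>step (y / 2)\<bar>" if "y \<in> {0..<2 * jump_pt j}" for y
    using that height_le_step[of "y / 2" j] step_pos[of "y / 2"] by simp
  show "ennreal x \<le> emeasure lebesgue {0..<2 * jump_pt j}"
    using assms jump_pt_pos[of j] by (simp add: ennreal_leI)
qed auto

definition band :: "nat \<Rightarrow> real set" where
  "band j = {W0 (jump_pt j)..<W0 (2 * jump_pt j)}"

lemma disjoint_family_band: "disjoint_family band"
  unfolding disjoint_family_on_def
proof (intro ballI impI)
  have "band j \<inter> band k = {}" if "j < k" for j k
    using W0_mono[of "2 * jump_pt j" "jump_pt k"] two_jump_pt_le[OF that] jump_pt_pos[of j]
    by (auto simp: band_def)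
  then show "band j \<inter> band k = {}" if "j \<noteq> k" for j k
    using that by (metis Int_commute nat_neq_iff)
qed

lemma emeasure_band: "emeasure lebesgue (band j) = ennreal (W0 (2 * jump_pt j) - W0 (jump_pt j))"
  using W0_mono[of "jump_pt j" "2 * jump_pt j"] jump_pt_pos[of j] by (simp add: band_def)

lemma band_pos:
  assumes "x \<in> band j"
  shows "0 < x"
proof -
  have "0 < W0 (jump_pt j)"
    using W0_jump_pt[of 1 j] G0_pos[of "height j"] height_pos[of j] by simp
  with assms show ?thesis by (auto simp: band_def)
qed

lemma G0_le_G_ext_dilated_step:
  assumes c: "0 < c" and x: "x \<in> band j"
  shows "ennreal (G0 (height j / c)) \<le> G_ext G0 (rearr (\<lambda>y. step (y / 2)) (phi_inv W0 x) / ereal c)"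
proof -
  have "0 < x" "x \<le> W0 (2 * jump_pt j)"
    using x band_pos by (auto simp: band_def)
  then have "phi_inv W0 x \<le> 2 * jump_pt j"
    using phi_inv_le_iff[OF phi_function_W0] jump_pt_pos[of j] by simp
  then have "ereal (height j) \<le> rearr (\<lambda>y. step (y / 2)) (phi_inv W0 x)"
    by (rule height_le_rearr_dilated_step)
  then have "ereal (height j / c) \<le> rearr (\<lambda>y. step (y / 2)) (phi_inv W0 x) / ereal c"
    using ereal_divide_right_mono[of "ereal (height j)" _ "ereal c"] c by simp
  then show ?thesis
    by (rule G_ext_ge[OF mono_G0])
qed

lemma nn_integral_band_sum:
  assumes "0 < c" "finite S"
  shows "(\<integral>\<^sup>+ x. (\<Sum>j\<in>S. ennreal (G0 (height j / c)) * indicator (band j) x) \<partial>lebesgue)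
    = ennreal (\<Sum>j\<in>S. G0 (height j / c) * (W0 (2 * jump_pt j) - W0 (jump_pt j)))"
proof -
  have G0_nonneg: "0 \<le> G0 (height j / c)" for j
    using assms height_pos[of j] G0_pos[of "height j / c"] by simp
  have W0_diff_nonneg: "0 \<le> W0 (2 * jump_pt j) - W0 (jump_pt j)" for j
    using W0_mono[of "jump_pt j" "2 * jump_pt j"] jump_pt_pos[of j] by simp
  have "(\<integral>\<^sup>+ x. (\<Sum>j\<in>S. ennreal (G0 (height j / c)) * indicator (band j) x) \<partial>lebesgue)
      = (\<Sum>j\<in>S. ennreal (G0 (height j / c)) * emeasure lebesgue (band j))"
    by (subst nn_integral_sum)
       (auto simp: band_def nn_integral_cmult_indicator measurable_completion)
  also have "\<dots> = (\<Sum>j\<in>S. ennreal (G0 (height j / c) * (W0 (2 * jump_pt j) - W0 (jump_pt j))))"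
    using G0_nonneg by (intro sum.cong refl) (simp add: emeasure_band ennreal_mult')
  also have "\<dots> = ennreal (\<Sum>j\<in>S. G0 (height j / c) * (W0 (2 * jump_pt j) - W0 (jump_pt j)))"
    using G0_nonneg W0_diff_nonneg by (intro sum_ennreal) simp
  finally show ?thesis .
qed

lemma band_sum_le_dilated_step_modular:
  assumes c: "0 < c" and S: "finite S"
  shows "(\<integral>\<^sup>+ x. (\<Sum>j\<in>S. ennreal (G0 (height j / c)) * indicator (band j) x) \<partial>lebesgue)
    \<le> modular_1G G0 (\<lambda>y. step (y / 2)) c"
  unfolding modular_1G_def
proof (rule nn_integral_mono)
  fix x
  show "(\<Sum>j\<in>S. ennreal (G0 (height j / c)) * indicator (band j) x)
      \<le> G_ext G0 (rearr (\<lambda>y. step (y / 2)) (phi_inv W0 x) / ereal c) * indicator {0..} x"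
  proof (cases "\<exists>j\<in>S. x \<in> band j")
    case True
    then obtain j where j: "j \<in> S" "x \<in> band j" by blast
    have "(\<Sum>j\<in>S. ennreal (G0 (height j / c)) * indicator (band j) x) = ennreal (G0 (height j / c))"
      using disjoint_family_on_mono[OF subset_UNIV disjoint_family_band] j S
      by (intro sum_indicator_disjoint_family) auto
    also have "\<dots> \<le> G_ext G0 (rearr (\<lambda>y. step (y / 2)) (phi_inv W0 x) / ereal c)"
      by (rule G0_le_G_ext_dilated_step[OF c j(2)])
    finally show ?thesis
      using band_pos[OF j(2)] by simp
  qed (auto intro: sum.neutral)
qed

lemma dilated_step_modular_gt_1:
  assumes c: "0 < c"
  shows "1 < modular_1G G0 (\<lambda>y. step (y / 2)) c"
proof -
  define S where "S = {nat \<lceil>c\<rceil> ..< nat \<lceil>c\<rceil> + nat \<lceil>2 * c\<rceil> + 1}"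
  have "2 * c \<le> real (nat \<lceil>2 * c\<rceil>)"
    by (rule real_nat_ceiling_ge)
  then have "2 * c < real (card S)"
    by (simp add: S_def)
  then have "1 < real (card S) / (2 * c)"
    using c by simp
  also have "\<dots> = (\<Sum>j\<in>S. 1 / (2 * c))"
    by simp
  also have "\<dots> \<le> (\<Sum>j\<in>S. G0 (height j / c) * (W0 (2 * jump_pt j) - W0 (jump_pt j)))"
  proof (rule sum_mono)
    fix j assume "j \<in> S"
    then have "c \<le> real j"
      using real_nat_ceiling_ge[of c] by (simp add: S_def)
    then show "1 / (2 * c) \<le> G0 (height j / c) * (W0 (2 * jump_pt j) - W0 (jump_pt j))"
      by (rule W0_band_ge[OF c])
  qed
  finally have "ennreal 1
      < (\<integral>\<^sup>+ x. (\<Sum>j\<in>S. ennreal (G0 (height j / c)) * indicator (band j) x) \<partial>lebesgue)"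
    using c by (subst nn_integral_band_sum) (auto simp: S_def intro: ennreal_lessI)
  also have "\<dots> \<le> modular_1G G0 (\<lambda>y. step (y / 2)) c"
    using c by (rule band_sum_le_dilated_step_modular) (simp add: S_def)
  finally show ?thesis by simp
qed

lemma norm_1G_dilated_step: "norm_1G G0 (\<lambda>y. step (y / 2)) = \<infinity>"
  by (intro norm_1G_eq_top dilated_step_modular_gt_1)

theorem theorem4p2:
  shows "\<exists>G. phi_function G \<and> dilatory G \<and> \<not> quasi_banach (L_1G G) (norm_1G G)"
proof (intro exI[of _ G0] conjI phi_function_G0 dilatory_G0 notI)
  assume "quasi_banach (L_1G G0) (norm_1G G0)"
  then have "(\<lambda>y. step y + step_gap y) \<in> L_1G G0"
    using step_in_L_1G step_gap_in_L_1G by (simp add: quasi_banach_def)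
  moreover have "(\<lambda>y. step y + step_gap y) = (\<lambda>y. step (y / 2))"
    by (simp add: step_gap_def)
  ultimately show False
    using norm_1G_dilated_step by (simp add: L_1G_def)
qed

end
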